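(* In Ruleset D, for any superposition of single Nim heaps, $\langle \mathrm{Nim}(i_1),\ldots,\mathrm{Nim}(i_\ell)\rangle_D\equiv *k$ where $k=\max_{1\le j\le\ell} i_j$.
   Context: Single-heap Nim: $\mathrm{Nim}(x)$ is a heap of $x$ tokens; classical move $(1,-j)$, $j\ge1$, removes $j$ tokens and is illegal if fewer than $j$ tokens remain. Quantum variation: a position is a nonempty finite set $\langle G_1,\ldots,G_n\rangle$ of classical positions; a classical move is legal if legal in some $G_i$; a Q-move is a nonempty set of legal classical moves, leading to the superposition of all legal results of applying one of its moves to one of the $G_i$. Ruleset D (subscript $D$): every Q-move, including a single classical move, is allowed. The player with no allowed Q-move loses. $\equiv$ is game equivalence, $*k$ the value of a classical Nim heap of $k$ tokens. *)

theory Defs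
  imports Main "HOL-Library.FSet"
begin

datatype game = Game (opts: "game fset")

lemma size_opt_less: "x |\<in>| S \<Longrightarrow> size x < size (Game S)"
proof -
  assume "x |\<in>| S"
  then have "Suc (size x) \<le> (\<Sum>y\<in>fset S. Suc (size y))"
    by (intro member_le_sum) auto
  then show ?thesis by simp
qed

function P_pos :: "game \<Rightarrow> bool" where
  "P_pos (Game S) = (\<forall>g \<in> fset S. \<not> P_pos g)"
  by pat_completeness auto
termination
  by (relation "measure size") (auto dest: size_opt_less)

function gsum :: "game \<Rightarrow> game \<Rightarrow> game" where
  "gsum (Game A) (Game B) =
     Game ((\<lambda>a. gsum a (Game B)) |`| A |\<union>| (\<lambda>b. gsum (Game A) b) |`| B)"
  by pat_completeness auto
termination
  by (relation "measure (\<lambda>(g, h). size g + size h)")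
     (auto dest!: size_opt_less)

definition game_equiv :: "game \<Rightarrow> game \<Rightarrow> bool" (infix "\<equiv>\<^sub>G" 50) where
  "G \<equiv>\<^sub>G H \<longleftrightarrow> (\<forall>X. P_pos (gsum G X) = P_pos (gsum H X))"

fun nimber :: "nat \<Rightarrow> game" where
  "nimber k = Game (Abs_fset (nimber ` {..<k}))"

text \<open>A quantum position is a nonempty finite set of classical single-heap Nim
positions, each represented by its number of tokens.  The classical move
\<open>(1,-j)\<close> is represented by \<open>j\<close>; it is legal in heap \<open>x\<close> iff \<open>1 \<le> j \<le> x\<close>.\<close>

definition classical_legal :: "nat \<Rightarrow> nat \<Rightarrow> bool" where
  "classical_legal x j \<longleftrightarrow> 1 \<le> j \<and> j \<le> x"

definition q_legal :: "nat set \<Rightarrow> nat \<Rightarrow> bool" where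
  "q_legal S j \<longleftrightarrow> (\<exists>x\<in>S. classical_legal x j)"

definition qmoves_D :: "nat set \<Rightarrow> nat set set" where
  "qmoves_D S = {J. J \<noteq> {} \<and> (\<forall>j\<in>J. q_legal S j)}"

definition q_result :: "nat set \<Rightarrow> nat set \<Rightarrow> nat set" where
  "q_result S J = {x - j | x j. x \<in> S \<and> j \<in> J \<and> classical_legal x j}"

lemma q_result_Max_less:
  assumes "finite S" "S \<noteq> {}" "J \<in> qmoves_D S"
  shows "Max (q_result S J) < Max S"
proof -
  have fin: "finite (q_result S J)"
    by (rule finite_subset[of _ "{..Max S}"]) (auto simp: q_result_def assms intro: le_trans[OF diff_le_self Max_ge])
  from assms(3) obtain j x where "j \<in> J" "x \<in> S" "classical_legal x j"
    by (force simp: qmoves_D_def q_legal_def)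
  then have ne: "q_result S J \<noteq> {}" by (auto simp: q_result_def)
  have "\<forall>y\<in>q_result S J. y < Max S"
  proof
    fix y assume "y \<in> q_result S J"
    then obtain x j where "x \<in> S" "classical_legal x j" "y = x - j"
      by (auto simp: q_result_def)
    moreover have "x \<le> Max S" using assms \<open>x \<in> S\<close> by simp
    ultimately show "y < Max S" by (auto simp: classical_legal_def)
  qed
  then show ?thesis using fin ne by simp
qed

function qgame_D :: "nat set \<Rightarrow> game" where
  "qgame_D S = (if finite S \<and> S \<noteq> {}
     then Game (Abs_fset ((\<lambda>J. qgame_D (q_result S J)) ` qmoves_D S))
     else Game {||})"
  by pat_completeness auto
termination
  by (relation "measure Max") (auto intro: q_result_Max_less)

end

theory Submission
  imports Defs
begin

text \<open>By the Sprague--Grundy theory it suffices to compute Grundy values.  Equal Grundy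
  values already give equivalence, because the sum \<open>G + H\<close> is a P-position exactly when
  \<open>G\<close> and \<open>H\<close> have the same Grundy value.  A Q-move from \<open>\<langle>S\<rangle>_D\<close> lowers the largest heap
  and leads to a position whose value is, by induction, the largest remaining heap; the single
  classical moves \<open>{j}\<close> with \<open>1 \<le> j \<le> Max S\<close> reach every value below \<open>Max S\<close>, so the mex
  of the option values is \<open>Max S\<close>.\<close>

declare qgame_D.simps[simp del] nimber.simps[simp del]

definition mex :: "nat set \<Rightarrow> nat" where
  "mex M = (LEAST n. n \<notin> M)"

lemma mex_notin: "finite M \<Longrightarrow> mex M \<notin> M"
  unfolding mex_def
  by (rule LeastI_ex) (use ex_new_if_finite[OF infinite_UNIV_nat] in blast)

lemma less_mex_in: "m < mex M \<Longrightarrow> m \<in> M"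
  unfolding mex_def using not_less_Least by blast

lemma mex_eqI: "(\<And>m. m < k \<Longrightarrow> m \<in> M) \<Longrightarrow> k \<notin> M \<Longrightarrow> mex M = k"
  unfolding mex_def by (rule Least_equality) (auto simp: not_less[symmetric])

lemma mex_lessThan: "mex {..<k} = k"
  by (rule mex_eqI) auto

lemma mex_eq_iff_notin:
  assumes "finite M" "finite N"
  shows "mex M = mex N \<longleftrightarrow> mex M \<notin> N \<and> mex N \<notin> M"
  using mex_notin[OF assms(1)] mex_notin[OF assms(2)] less_mex_in[of "mex M" N]
    less_mex_in[of "mex N" M]
  by (metis linorder_neqE_nat)

function grundy :: "game \<Rightarrow> nat" where
  "grundy (Game S) = mex (grundy ` fset S)"
  by pat_completeness auto
termination
  by (relation "measure size") (auto dest: size_opt_less)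

lemma P_pos_gsum_iff_grundy_eq: "P_pos (gsum G H) \<longleftrightarrow> grundy G = grundy H"
proof (induction G H rule: gsum.induct)
  case (1 A B)
  have "P_pos (gsum (Game A) (Game B)) \<longleftrightarrow>
      (\<forall>a\<in>fset A. \<not> P_pos (gsum a (Game B))) \<and> (\<forall>b\<in>fset B. \<not> P_pos (gsum (Game A) b))"
    by auto
  also have "\<dots> \<longleftrightarrow> grundy (Game B) \<notin> grundy ` fset A \<and> grundy (Game A) \<notin> grundy ` fset B"
    using "1.IH" by (auto simp del: grundy.simps intro: rev_image_eqI)
  also have "\<dots> \<longleftrightarrow> grundy (Game A) = grundy (Game B)"
    using mex_eq_iff_notin[of "grundy ` fset A" "grundy ` fset B"] by auto
  finally show ?case .
qed

theorem grundy_eq_imp_game_equiv: "grundy G = grundy H \<Longrightarrow> G \<equiv>\<^sub>G H"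
  by (simp add: game_equiv_def P_pos_gsum_iff_grundy_eq)

lemma grundy_nimber: "grundy (nimber k) = k"
proof (induction k rule: less_induct)
  case (less k)
  have "grundy (nimber k) = mex ((\<lambda>i. grundy (nimber i)) ` {..<k})"
    by (subst nimber.simps) (simp add: Abs_fset_inverse image_image)
  also have "\<dots> = mex {..<k}"
    using less.IH by simp
  finally show ?case
    by (simp add: mex_lessThan)
qed

lemma finite_qmoves_D:
  assumes "finite S"
  shows "finite (qmoves_D S)"
proof (rule finite_subset)
  show "qmoves_D S \<subseteq> Pow {..Max S}"
    using assms by (auto simp: qmoves_D_def q_legal_def classical_legal_def
        intro: le_trans[OF _ Max_ge])
qed simp

lemma finite_q_result:
  assumes "finite S"
  shows "finite (q_result S J)"
proof (rule finite_subset)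
  show "q_result S J \<subseteq> {..Max S}"
    using assms by (auto simp: q_result_def intro: le_trans[OF diff_le_self])
qed simp

lemma q_result_nonempty: "J \<in> qmoves_D S \<Longrightarrow> q_result S J \<noteq> {}"
  by (force simp: qmoves_D_def q_legal_def q_result_def)

lemma Max_q_result_singleton:
  assumes "finite S" "S \<noteq> {}" "1 \<le> j" "j \<le> Max S"
  shows "Max (q_result S {j}) = Max S - j"
proof (rule Max_eqI)
  show "finite (q_result S {j})"
    using assms(1) by (rule finite_q_result)
  show "Max S - j \<in> q_result S {j}"
    using assms Max_in[OF assms(1,2)] unfolding q_result_def classical_legal_def by blast
  show "y \<le> Max S - j" if "y \<in> q_result S {j}" for y
    using that assms(1) by (auto simp: q_result_def intro: diff_le_mono)
qed

lemma Max_q_result_image: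
  assumes "finite S" "S \<noteq> {}"
  shows "(\<lambda>J. Max (q_result S J)) ` qmoves_D S = {..<Max S}"
proof (intro equalityI subsetI)
  fix m assume "m \<in> (\<lambda>J. Max (q_result S J)) ` qmoves_D S"
  then show "m \<in> {..<Max S}"
    using q_result_Max_less[OF assms] by auto
next
  fix m assume "m \<in> {..<Max S}"
  then have move: "{Max S - m} \<in> qmoves_D S"
    using Max_in[OF assms] unfolding qmoves_D_def q_legal_def classical_legal_def
    by (auto intro!: bexI[of _ "Max S"])
  have "Max (q_result S {Max S - m}) = m"
    using \<open>m \<in> {..<Max S}\<close> by (subst Max_q_result_singleton[OF assms]) auto
  with move show "m \<in> (\<lambda>J. Max (q_result S J)) ` qmoves_D S"
    by (metis image_eqI)
qed

lemma grundy_qgame_D: "finite S \<Longrightarrow> S \<noteq> {} \<Longrightarrow> grundy (qgame_D S) = Max S"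
proof (induction S rule: qgame_D.induct)
  case (1 S)
  have option_values: "grundy (qgame_D (q_result S J)) = Max (q_result S J)"
    if "J \<in> qmoves_D S" for J
    using 1 that finite_q_result q_result_nonempty by blast
  have "grundy (qgame_D S) = mex ((\<lambda>J. grundy (qgame_D (q_result S J))) ` qmoves_D S)"
    using 1 finite_qmoves_D by (subst qgame_D.simps) (simp add: Abs_fset_inverse image_image)
  also have "\<dots> = mex ((\<lambda>J. Max (q_result S J)) ` qmoves_D S)"
    using option_values by (simp cong: image_cong)
  also have "\<dots> = Max S"
    using 1 by (simp add: Max_q_result_image mex_lessThan)
  finally show ?case .
qed

theorem lemma3:
  fixes hs :: "nat list"
  assumes "hs \<noteq> []"
  shows "qgame_D (set hs) \<equiv>\<^sub>G nimber (Max (set hs))"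
proof (rule grundy_eq_imp_game_equiv)
  have "grundy (qgame_D (set hs)) = Max (set hs)"
    using assms by (simp add: grundy_qgame_D)
  then show "grundy (qgame_D (set hs)) = grundy (nimber (Max (set hs)))"
    by (simp add: grundy_nimber)
qed

end
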